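(* Let $X$ be a geodesic metric space, $e\in X$, and $N\le N'$ Morse gauges. For $x,y\in\partial_s X^{(N)}_e$ (regarded also as points of $\partial_s X^{(N')}_e$ via the inclusion $X^{(N)}_e\subseteq X^{(N')}_e$), \[(x\cdot_N y)_e\le (x\cdot_{N'} y)_e\le (x\cdot_N y)_e+32N'(3,0).\]
   Context: A Morse gauge is a function $N$ assigning to each $(K,C)$ a number $N(K,C)\ge0$; $N\le N'$ means pointwise. A geodesic is $N$-Morse if every $(K,C)$-quasi-geodesic with endpoints on it lies in its $N(K,C)$-neighbourhood. $X^{(N)}_e$ is the set of points joined to $e$ by an $N$-Morse geodesic (restricted metric); it is hyperbolic. Its sequential boundary $\partial_s X^{(N)}_e$ consists of equivalence classes of sequences $(x_n)$ in $X^{(N)}_e$ with $(x_i\cdot x_j)_e\to\infty$, where $(a\cdot b)_e=\frac12(d(e,a)+d(e,b)-d(a,b))$ and $(x_n)\sim(y_m)$ iff $(x_i\cdot y_j)_e\to\infty$. The $N$-Gromov product $(x\cdot_N y)_e$ of $x,y\in\partial_s X^{(N)}_e$ is the supremum of $\liminf_{m,n\to\infty}(x_n\cdot y_m)_e$ over all pairs of sequences $(x_n),(y_m)\subseteq X^{(N)}_e$ representing $x$ and $y$. *)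

theory Defs
  imports "HOL-Analysis.Analysis"
begin

definition gromov_prod :: "'a::metric_space \<Rightarrow> 'a \<Rightarrow> 'a \<Rightarrow> real" where
  "gromov_prod e a b = (dist e a + dist e b - dist a b) / 2"

definition geodesic_path :: "(real \<Rightarrow> 'a::metric_space) \<Rightarrow> 'a \<Rightarrow> 'a \<Rightarrow> bool" where
  "geodesic_path \<gamma> x y \<longleftrightarrow> \<gamma> 0 = x \<and> \<gamma> (dist x y) = y \<and>
     (\<forall>s\<in>{0..dist x y}. \<forall>t\<in>{0..dist x y}. dist (\<gamma> s) (\<gamma> t) = \<bar>s - t\<bar>)"

definition geodesic_space :: "'a::metric_space itself \<Rightarrow> bool" where
  "geodesic_space _ \<longleftrightarrow> (\<forall>x y::'a. \<exists>\<gamma>. geodesic_path \<gamma> x y)"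

definition quasi_geodesic :: "real \<Rightarrow> real \<Rightarrow> (real \<Rightarrow> 'a::metric_space) \<Rightarrow> real \<Rightarrow> real \<Rightarrow> bool" where
  "quasi_geodesic K C q a b \<longleftrightarrow> a \<le> b \<and>
     (\<forall>s\<in>{a..b}. \<forall>t\<in>{a..b}. \<bar>s - t\<bar> / K - C \<le> dist (q s) (q t) \<and> dist (q s) (q t) \<le> K * \<bar>s - t\<bar> + C)"

definition morse_gauge :: "(real \<Rightarrow> real \<Rightarrow> real) \<Rightarrow> bool" where
  "morse_gauge N \<longleftrightarrow> (\<forall>K C. K \<ge> 1 \<longrightarrow> C \<ge> 0 \<longrightarrow> N K C \<ge> 0)"

definition gauge_le :: "(real \<Rightarrow> real \<Rightarrow> real) \<Rightarrow> (real \<Rightarrow> real \<Rightarrow> real) \<Rightarrow> bool" where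
  "gauge_le N N' \<longleftrightarrow> (\<forall>K C. K \<ge> 1 \<longrightarrow> C \<ge> 0 \<longrightarrow> N K C \<le> N' K C)"

definition morse_set :: "(real \<Rightarrow> real \<Rightarrow> real) \<Rightarrow> 'a::metric_space set \<Rightarrow> bool" where
  "morse_set N G \<longleftrightarrow> (\<forall>K C q a b. K \<ge> 1 \<longrightarrow> C \<ge> 0 \<longrightarrow> quasi_geodesic K C q a b \<longrightarrow>
      q a \<in> G \<longrightarrow> q b \<in> G \<longrightarrow> (\<forall>t\<in>{a..b}. \<exists>g\<in>G. dist (q t) g \<le> N K C))"

definition morse_stratum :: "(real \<Rightarrow> real \<Rightarrow> real) \<Rightarrow> 'a::metric_space \<Rightarrow> 'a set" where
  "morse_stratum N e = {x. \<exists>\<gamma>. geodesic_path \<gamma> e x \<and> morse_set N (\<gamma> ` {0..dist e x})}"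

definition gromov_seq :: "(real \<Rightarrow> real \<Rightarrow> real) \<Rightarrow> 'a::metric_space \<Rightarrow> (nat \<Rightarrow> 'a) \<Rightarrow> bool" where
  "gromov_seq N e x \<longleftrightarrow> range x \<subseteq> morse_stratum N e \<and>
     filterlim (\<lambda>(i,j). gromov_prod e (x i) (x j)) at_top (sequentially \<times>\<^sub>F sequentially)"

definition seq_equiv :: "'a::metric_space \<Rightarrow> (nat \<Rightarrow> 'a) \<Rightarrow> (nat \<Rightarrow> 'a) \<Rightarrow> bool" where
  "seq_equiv e x y \<longleftrightarrow>
     filterlim (\<lambda>(i,j). gromov_prod e (x i) (y j)) at_top (sequentially \<times>\<^sub>F sequentially)"

definition bdry_class :: "(real \<Rightarrow> real \<Rightarrow> real) \<Rightarrow> 'a::metric_space \<Rightarrow> (nat \<Rightarrow> 'a) \<Rightarrow> (nat \<Rightarrow> 'a) set" where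
  "bdry_class N e x = {y. gromov_seq N e y \<and> seq_equiv e x y}"

definition seq_boundary :: "(real \<Rightarrow> real \<Rightarrow> real) \<Rightarrow> 'a::metric_space \<Rightarrow> (nat \<Rightarrow> 'a) set set" where
  "seq_boundary N e = {bdry_class N e x | x. gromov_seq N e x}"

(* N-Gromov product of two boundary points (as sets of representing sequences) *)
definition N_gromov_prod :: "'a::metric_space \<Rightarrow> (nat \<Rightarrow> 'a) set \<Rightarrow> (nat \<Rightarrow> 'a) set \<Rightarrow> ereal" where
  "N_gromov_prod e X Y = (SUP (x,y)\<in>X \<times> Y.
      Liminf (sequentially \<times>\<^sub>F sequentially) (\<lambda>(n,m). ereal (gromov_prod e (x n) (y m))))"

end

theory Submission
  imports Defs
begin

text \<open>
  Morse geodesics issuing from \<open>e\<close> are uniformly thin. If \<open>\<gamma>\<^sub>a, \<gamma>\<^sub>b\<close> are \<open>N\<close>-Morse geodesics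
  from \<open>e\<close> to \<open>a\<close> and \<open>b\<close>, let \<open>z\<close> be a point of a geodesic \<open>[a,b]\<close> closest to \<open>e\<close>. Then \<open>[a,z]\<close>
  followed by \<open>[z,e]\<close> is a \<open>(3,0)\<close>-quasi-geodesic, so \<open>[z,e]\<close> lies \<open>N(3,0)\<close>-close to both
  \<open>\<gamma>\<^sub>a\<close> and \<open>\<gamma>\<^sub>b\<close>; as \<open>d(e,z) \<ge> (a\<cdot>b)\<^sub>e\<close>, the two geodesics stay \<open>4N(3,0)\<close>-close up to time
  \<open>(a\<cdot>b)\<^sub>e\<close>. This gives the four-point condition \<open>(a\<cdot>c)\<^sub>e \<ge> min((a\<cdot>b)\<^sub>e, (b\<cdot>c)\<^sub>e) - 4N(3,0)\<close>
  on the \<open>N\<close>-stratum.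

  The first inequality holds because the \<open>N\<close>-stratum lies in the \<open>N'\<close>-stratum, so there are
  more representing sequences for \<open>N'\<close>. For the second, given \<open>N'\<close>-representatives \<open>x', y'\<close> of
  \<open>x, y\<close>, the four-point condition for \<open>N'\<close>, applied along \<open>x \<sim> x'\<close> and \<open>y \<sim> y'\<close>, bounds the
  liminf of \<open>(x'\<^sub>n\<cdot>y'\<^sub>m)\<^sub>e\<close> by that of \<open>(x\<^sub>n\<cdot>y\<^sub>m)\<^sub>e\<close> plus \<open>8N'(3,0)\<close>.
\<close>

lemma geodesic_path_dist:
  "geodesic_path \<gamma> x y \<Longrightarrow> s \<in> {0..dist x y} \<Longrightarrow> t \<in> {0..dist x y} \<Longrightarrow> dist (\<gamma> s) (\<gamma> t) = \<bar>s - t\<bar>"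
  unfolding geodesic_path_def by blast

lemma geodesic_path_ends:
  "geodesic_path \<gamma> x y \<Longrightarrow> \<gamma> 0 = x \<and> \<gamma> (dist x y) = y"
  unfolding geodesic_path_def by blast

lemma geodesic_path_ends_in_image:
  assumes "geodesic_path \<gamma> x y"
  shows "x \<in> \<gamma> ` {0..dist x y}" "y \<in> \<gamma> ` {0..dist x y}"
  using geodesic_path_ends[OF assms]
  by (metis atLeastAtMost_iff image_eqI order_refl zero_le_dist)+

lemma geodesic_path_dist_start:
  "geodesic_path \<gamma> x y \<Longrightarrow> t \<in> {0..dist x y} \<Longrightarrow> dist x (\<gamma> t) = t"
  using geodesic_path_dist[of \<gamma> x y 0 t] geodesic_path_ends[of \<gamma> x y] by auto

lemma geodesic_path_dist_end:
  "geodesic_path \<gamma> x y \<Longrightarrow> t \<in> {0..dist x y} \<Longrightarrow> dist (\<gamma> t) y = dist x y - t"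
  using geodesic_path_dist[of \<gamma> x y t "dist x y"] geodesic_path_ends[of \<gamma> x y] by auto

lemma geodesic_path_continuous_on:
  assumes "geodesic_path \<gamma> x y"
  shows "continuous_on {0..dist x y} \<gamma>"
  unfolding continuous_on_iff
proof (intro ballI allI impI)
  fix s \<epsilon> :: real
  assume "s \<in> {0..dist x y}" "0 < \<epsilon>"
  then show "\<exists>\<delta>>0. \<forall>t\<in>{0..dist x y}. dist t s < \<delta> \<longrightarrow> dist (\<gamma> t) (\<gamma> s) < \<epsilon>"
    using geodesic_path_dist[OF assms] by (intro exI[of _ \<epsilon>]) (auto simp: dist_real_def)
qed

lemma geodesic_path_reverse:
  "geodesic_path \<gamma> x y \<Longrightarrow> geodesic_path (\<lambda>s. \<gamma> (dist x y - s)) y x"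
  unfolding geodesic_path_def by (auto simp: dist_commute abs_minus_commute)

lemma geodesic_path_closest_point:
  assumes "geodesic_path \<gamma> x y"
  obtains u where "u \<in> {0..dist x y}" "\<And>s. s \<in> {0..dist x y} \<Longrightarrow> dist e (\<gamma> u) \<le> dist e (\<gamma> s)"
proof -
  have "continuous_on {0..dist x y} (\<lambda>s. dist e (\<gamma> s))"
    using geodesic_path_continuous_on[OF assms] by (auto intro!: continuous_intros)
  then show ?thesis
    using continuous_attains_inf[of "{0..dist x y}" "\<lambda>s. dist e (\<gamma> s)"] that by auto
qed

lemma gromov_prod_commute: "gromov_prod e a b = gromov_prod e b a"
  unfolding gromov_prod_def by (simp add: dist_commute)

lemma gromov_prod_nonneg: "0 \<le> gromov_prod e a b"
  unfolding gromov_prod_def using dist_triangle[of a b e] by (simp add: dist_commute)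

lemma gromov_prod_le_dist: "gromov_prod e a b \<le> dist e a"
  unfolding gromov_prod_def using dist_triangle[of e b a] by (simp add: dist_commute)

lemma gromov_prod_le_dist_geodesic_point:
  assumes "geodesic_path \<gamma> a b" "u \<in> {0..dist a b}"
  shows "gromov_prod e a b \<le> dist e (\<gamma> u)"
  using dist_triangle[of e a "\<gamma> u"] dist_triangle[of e b "\<gamma> u"]
    geodesic_path_dist_start[OF assms] geodesic_path_dist_end[OF assms]
  unfolding gromov_prod_def by (simp add: dist_commute)

text \<open>The lower bound \<open>|s - t|/3\<close> across the junction uses that \<open>\<gamma> u\<close> is closest to \<open>e\<close> on \<open>\<gamma>[0,u]\<close>.\<close>

lemma quasi_geodesic_concat_closest_point:
  assumes \<gamma>: "geodesic_path \<gamma> a b" and u: "u \<in> {0..dist a b}"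
    and closest: "\<And>s. s \<in> {0..u} \<Longrightarrow> dist e (\<gamma> u) \<le> dist e (\<gamma> s)"
    and \<eta>: "geodesic_path \<eta> (\<gamma> u) e"
  shows "quasi_geodesic 3 0 (\<lambda>s. if s \<le> u then \<gamma> s else \<eta> (s - u)) 0 (u + dist (\<gamma> u) e)"
proof -
  let ?r = "dist (\<gamma> u) e"
  let ?q = "\<lambda>s. if s \<le> u then \<gamma> s else \<eta> (s - u)"
  have junction: "\<bar>s - t\<bar> / 3 \<le> dist (\<gamma> s) (\<eta> (t - u)) \<and> dist (\<gamma> s) (\<eta> (t - u)) \<le> 3 * \<bar>s - t\<bar>"
    if s: "0 \<le> s" "s \<le> u" and t: "u \<le> t" "t \<le> u + ?r" for s t
  proof -
    have \<eta>_start: "dist (\<gamma> u) (\<eta> (t - u)) = t - u"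
      using geodesic_path_dist_start[OF \<eta>] t by auto
    have \<eta>_end: "dist (\<eta> (t - u)) e = ?r - (t - u)"
      using geodesic_path_dist_end[OF \<eta>] t by auto
    have \<gamma>_part: "dist (\<gamma> s) (\<gamma> u) = u - s"
      using geodesic_path_dist[OF \<gamma>, of s u] s u by auto
    have "dist e (\<gamma> u) \<le> dist e (\<gamma> s)" using closest s by auto
    then have "t - u \<le> dist (\<gamma> s) (\<eta> (t - u))"
      using dist_triangle[of e "\<gamma> s" "\<eta> (t - u)"] \<eta>_end by (simp add: dist_commute)
    moreover have "u - s - (t - u) \<le> dist (\<gamma> s) (\<eta> (t - u))"
      using dist_triangle[of "\<gamma> s" "\<gamma> u" "\<eta> (t - u)"] \<gamma>_part \<eta>_start by (simp add: dist_commute)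
    moreover have "dist (\<gamma> s) (\<eta> (t - u)) \<le> (u - s) + (t - u)"
      using dist_triangle[of "\<gamma> s" "\<eta> (t - u)" "\<gamma> u"] \<gamma>_part \<eta>_start by (simp add: dist_commute)
    ultimately show ?thesis using s t by auto
  qed
  have "\<bar>s - t\<bar> / 3 - 0 \<le> dist (?q s) (?q t) \<and> dist (?q s) (?q t) \<le> 3 * \<bar>s - t\<bar> + 0"
    if s: "s \<in> {0..u + ?r}" and t: "t \<in> {0..u + ?r}" for s t
  proof (cases "s \<le> u"; cases "t \<le> u")
    assume "s \<le> u" "t \<le> u"
    then show ?thesis using geodesic_path_dist[OF \<gamma>, of s t] s t u by auto
  next
    assume "s \<le> u" "\<not> t \<le> u"
    then show ?thesis using junction[of s t] s t by auto
  next
    assume "\<not> s \<le> u" "t \<le> u"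
    then show ?thesis using junction[of t s] s t by (auto simp: dist_commute abs_minus_commute)
  next
    assume "\<not> s \<le> u" "\<not> t \<le> u"
    then show ?thesis using geodesic_path_dist[OF \<eta>, of "s - u" "t - u"] s t by auto
  qed
  then show ?thesis unfolding quasi_geodesic_def using u by auto
qed

lemma morse_set_near_concat_closest_point:
  assumes \<gamma>: "geodesic_path \<gamma> a b" and u: "u \<in> {0..dist a b}"
    and closest: "\<And>s. s \<in> {0..u} \<Longrightarrow> dist e (\<gamma> u) \<le> dist e (\<gamma> s)"
    and \<eta>: "geodesic_path \<eta> (\<gamma> u) e"
    and G: "morse_set N G" "a \<in> G" "e \<in> G"
    and t: "t \<in> {0..dist (\<gamma> u) e}"
  shows "\<exists>g\<in>G. dist (\<eta> t) g \<le> N 3 0"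
proof -
  let ?q = "\<lambda>s. if s \<le> u then \<gamma> s else \<eta> (s - u)"
  have ends: "?q 0 = a" "?q (u + dist (\<gamma> u) e) = e"
    using geodesic_path_ends[OF \<gamma>] geodesic_path_ends[OF \<eta>] u by auto
  have "?q (u + t) = \<eta> t"
    using geodesic_path_ends[OF \<eta>] t by (cases "t = 0") auto
  then show ?thesis
    using G(1)[unfolded morse_set_def, rule_format, of 3 0 ?q 0 "u + dist (\<gamma> u) e" "u + t"]
      quasi_geodesic_concat_closest_point[OF \<gamma> u closest \<eta>] G ends t u by auto
qed

lemma geodesic_path_near_point_at_same_distance:
  assumes \<gamma>: "geodesic_path \<gamma> e a" and t: "t \<in> {0..dist e a}" and t': "t' \<in> {0..dist e a}"
    and near: "dist w (\<gamma> t') \<le> M" and w: "dist e w = t"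
  shows "dist w (\<gamma> t) \<le> 2 * M"
proof -
  have "\<bar>t' - t\<bar> \<le> M"
    using dist_triangle[of e w "\<gamma> t'"] dist_triangle[of e "\<gamma> t'" w] near w
      geodesic_path_dist_start[OF \<gamma> t'] by (auto simp: dist_commute abs_le_iff)
  then show ?thesis
    using dist_triangle[of w "\<gamma> t" "\<gamma> t'"] near geodesic_path_dist[OF \<gamma> t' t]
    by (simp add: dist_commute)
qed

lemma morse_geodesic_near_geodesic_from_closest_point:
  assumes \<gamma>: "geodesic_path \<gamma> a b" and u: "u \<in> {0..dist a b}"
    and closest: "\<And>s. s \<in> {0..u} \<Longrightarrow> dist e (\<gamma> u) \<le> dist e (\<gamma> s)"
    and \<eta>: "geodesic_path \<eta> (\<gamma> u) e"
    and \<gamma>\<^sub>a: "geodesic_path \<gamma>\<^sub>a e a" and morse: "morse_set N (\<gamma>\<^sub>a ` {0..dist e a})"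
    and t: "0 \<le> t" "t \<le> dist (\<gamma> u) e"
  shows "dist (\<eta> (dist (\<gamma> u) e - t)) (\<gamma>\<^sub>a t) \<le> 2 * N 3 0"
proof -
  let ?w = "\<eta> (dist (\<gamma> u) e - t)"
  have "\<exists>g\<in>\<gamma>\<^sub>a ` {0..dist e a}. dist ?w g \<le> N 3 0"
    using morse_set_near_concat_closest_point[OF \<gamma> u closest \<eta> morse
        geodesic_path_ends_in_image(2,1)[OF \<gamma>\<^sub>a], of "dist (\<gamma> u) e - t"] t by simp
  then obtain t' where t': "t' \<in> {0..dist e a}" "dist ?w (\<gamma>\<^sub>a t') \<le> N 3 0"
    by blast
  have "dist e (\<gamma> u) \<le> dist e a"
    using closest[of 0] geodesic_path_ends[OF \<gamma>] u by simp
  then have "t \<in> {0..dist e a}" using t by (simp add: dist_commute)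
  moreover have "dist e ?w = t"
    using geodesic_path_dist_end[OF \<eta>, of "dist (\<gamma> u) e - t"] t by (simp add: dist_commute)
  ultimately show ?thesis
    using geodesic_path_near_point_at_same_distance[OF \<gamma>\<^sub>a _ t'] by blast
qed

lemma morse_geodesics_fellow_travel:
  assumes space: "geodesic_space TYPE('a::metric_space)"
    and \<gamma>\<^sub>a: "geodesic_path \<gamma>\<^sub>a e (a::'a)" "morse_set N (\<gamma>\<^sub>a ` {0..dist e a})"
    and \<gamma>\<^sub>b: "geodesic_path \<gamma>\<^sub>b e b" "morse_set N (\<gamma>\<^sub>b ` {0..dist e b})"
    and t: "0 \<le> t" "t \<le> gromov_prod e a b"
  shows "dist (\<gamma>\<^sub>a t) (\<gamma>\<^sub>b t) \<le> 4 * N 3 0"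
proof -
  obtain \<gamma> where \<gamma>: "geodesic_path \<gamma> a b" using space unfolding geodesic_space_def by blast
  obtain u where u: "u \<in> {0..dist a b}"
    and closest: "\<And>s. s \<in> {0..dist a b} \<Longrightarrow> dist e (\<gamma> u) \<le> dist e (\<gamma> s)"
    using geodesic_path_closest_point[OF \<gamma>] by blast
  obtain \<eta> where \<eta>: "geodesic_path \<eta> (\<gamma> u) e" using space unfolding geodesic_space_def by blast
  let ?r = "dist (\<gamma> u) e"
  have tr: "t \<le> ?r"
    using t gromov_prod_le_dist_geodesic_point[OF \<gamma> u, of e] by (simp add: dist_commute)
  have "dist (\<eta> (?r - t)) (\<gamma>\<^sub>a t) \<le> 2 * N 3 0"
    using morse_geodesic_near_geodesic_from_closest_point[OF \<gamma> u _ \<eta> \<gamma>\<^sub>a t(1) tr] closest u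
    by simp
  moreover have "dist (\<eta> (?r - t)) (\<gamma>\<^sub>b t) \<le> 2 * N 3 0"
  proof -
    define \<gamma>' where "\<gamma>' = (\<lambda>s. \<gamma> (dist a b - s))"
    have \<gamma>': "geodesic_path \<gamma>' b a"
      unfolding \<gamma>'_def by (rule geodesic_path_reverse[OF \<gamma>])
    have u': "dist a b - u \<in> {0..dist b a}" and same: "\<gamma>' (dist a b - u) = \<gamma> u"
      using u by (simp_all add: \<gamma>'_def dist_commute)
    have "dist e (\<gamma>' (dist a b - u)) \<le> dist e (\<gamma>' s)" if "s \<in> {0..dist a b - u}" for s
      unfolding same using closest[of "dist a b - s"] that u by (simp add: \<gamma>'_def)
    then show ?thesis
      using morse_geodesic_near_geodesic_from_closest_point[OF \<gamma>' u' _ _ \<gamma>\<^sub>b t(1)] \<eta> tr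
      unfolding same by blast
  qed
  ultimately show ?thesis
    using dist_triangle[of "\<gamma>\<^sub>a t" "\<gamma>\<^sub>b t" "\<eta> (?r - t)"] by (simp add: dist_commute)
qed

lemma morse_stratum_gromov_prod_min_le:
  assumes space: "geodesic_space TYPE('a::metric_space)"
    and "(a::'a) \<in> morse_stratum N e" "b \<in> morse_stratum N e" "c \<in> morse_stratum N e"
  shows "min (gromov_prod e a b) (gromov_prod e b c) - 4 * N 3 0 \<le> gromov_prod e a c"
proof -
  obtain \<gamma>\<^sub>a \<gamma>\<^sub>b \<gamma>\<^sub>c where
    \<gamma>\<^sub>a: "geodesic_path \<gamma>\<^sub>a e a" "morse_set N (\<gamma>\<^sub>a ` {0..dist e a})" and
    \<gamma>\<^sub>b: "geodesic_path \<gamma>\<^sub>b e b" "morse_set N (\<gamma>\<^sub>b ` {0..dist e b})" and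
    \<gamma>\<^sub>c: "geodesic_path \<gamma>\<^sub>c e c" "morse_set N (\<gamma>\<^sub>c ` {0..dist e c})"
    using assms(2-4) unfolding morse_stratum_def by blast
  define t where "t = min (gromov_prod e a b) (gromov_prod e b c)"
  have t0: "0 \<le> t" using gromov_prod_nonneg[of e a b] gromov_prod_nonneg[of e b c] t_def by simp
  have "t \<le> gromov_prod e a b" "t \<le> gromov_prod e b c" unfolding t_def by simp_all
  then have ab: "dist (\<gamma>\<^sub>a t) (\<gamma>\<^sub>b t) \<le> 4 * N 3 0" and bc: "dist (\<gamma>\<^sub>b t) (\<gamma>\<^sub>c t) \<le> 4 * N 3 0"
    using morse_geodesics_fellow_travel[OF space \<gamma>\<^sub>a \<gamma>\<^sub>b t0]
      morse_geodesics_fellow_travel[OF space \<gamma>\<^sub>b \<gamma>\<^sub>c t0] by simp_all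
  have "t \<in> {0..dist e a}" "t \<in> {0..dist e c}"
    using gromov_prod_le_dist[of e a b] gromov_prod_le_dist[of e c b] gromov_prod_commute[of e b c]
      t0 t_def by auto
  then have "dist a (\<gamma>\<^sub>a t) = dist e a - t" "dist (\<gamma>\<^sub>c t) c = dist e c - t"
    using geodesic_path_dist_end[OF \<gamma>\<^sub>a(1)] geodesic_path_dist_end[OF \<gamma>\<^sub>c(1)]
    by (simp_all add: dist_commute)
  then have "dist a c \<le> dist e a + dist e c - 2 * t + 8 * N 3 0"
    using dist_triangle[of a c "\<gamma>\<^sub>a t"] dist_triangle[of "\<gamma>\<^sub>a t" c "\<gamma>\<^sub>b t"]
      dist_triangle[of "\<gamma>\<^sub>b t" c "\<gamma>\<^sub>c t"] ab bc by linarith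
  then show ?thesis unfolding gromov_prod_def t_def by simp
qed

lemma Liminf_sequentially_prod_le_of_min_bound:
  fixes X Y P P' :: "nat \<Rightarrow> nat \<Rightarrow> real"
  assumes X: "filterlim (\<lambda>(k, n). X k n) at_top (sequentially \<times>\<^sub>F sequentially)"
    and Y: "filterlim (\<lambda>(l, m). Y l m) at_top (sequentially \<times>\<^sub>F sequentially)"
    and bound: "\<And>k l n m. min (X k n) (min (P' n m) (Y l m)) - d \<le> P k l"
  shows "Liminf (sequentially \<times>\<^sub>F sequentially) (\<lambda>(n, m). ereal (P' n m))
       \<le> Liminf (sequentially \<times>\<^sub>F sequentially) (\<lambda>(k, l). ereal (P k l)) + ereal d"
proof (rule ccontr)
  let ?F = "sequentially \<times>\<^sub>F sequentially"
  let ?L' = "Liminf ?F (\<lambda>(n, m). ereal (P' n m))"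
  let ?L = "Liminf ?F (\<lambda>(k, l). ereal (P k l))"
  assume "\<not> ?L' \<le> ?L + ereal d"
  then have "?L + ereal d < ?L'" by simp
  then obtain c where c: "?L + ereal d < ereal c" "ereal c < ?L'"
    using ereal_dense2 by blast
  have "eventually (\<lambda>(n, m). ereal c < ereal (P' n m)) ?F"
    using c(2) less_LiminfD by (fastforce simp: case_prod_unfold)
  moreover have "eventually (\<lambda>(k, n). c \<le> X k n) ?F" "eventually (\<lambda>(l, m). c \<le> Y l m) ?F"
    using X Y unfolding filterlim_at_top by (simp_all add: case_prod_unfold)
  ultimately have "eventually (\<lambda>(i, j). c < P' i j \<and> c \<le> X i j \<and> c \<le> Y i j) ?F"
    by eventually_elim auto
  then obtain K where K: "\<And>i j. K \<le> i \<Longrightarrow> K \<le> j \<Longrightarrow> c < P' i j \<and> c \<le> X i j \<and> c \<le> Y i j"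
    unfolding eventually_prod_sequentially by auto
  text \<open>Choosing the middle indices \<open>n = m = K\<close> in \<open>bound\<close> controls every pair \<open>k, l \<ge> K\<close>.\<close>
  have "c - d \<le> P k l" if "K \<le> k" "K \<le> l" for k l
    using bound[of k K K l] K[of k K] K[of l K] K[of K K] that by linarith
  then have "eventually (\<lambda>(k, l). ereal (c - d) \<le> ereal (P k l)) ?F"
    unfolding eventually_prod_sequentially by auto
  then have "ereal (c - d) \<le> ?L"
    by (simp add: Liminf_bounded case_prod_unfold)
  then have "ereal c \<le> ?L + ereal d" by (cases ?L) auto
  then show False using c(1) by simp
qed

lemma morse_stratum_gromov_prod_chain:
  assumes space: "geodesic_space TYPE('a::metric_space)"
    and "(a::'a) \<in> morse_stratum N e" "a' \<in> morse_stratum N e"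
    and "b' \<in> morse_stratum N e" "b \<in> morse_stratum N e"
  shows "min (gromov_prod e a a') (min (gromov_prod e a' b') (gromov_prod e b b')) - 8 * N 3 0
    \<le> gromov_prod e a b"
proof -
  have "min (gromov_prod e a a') (gromov_prod e a' b) - 4 * N 3 0 \<le> gromov_prod e a b"
    using morse_stratum_gromov_prod_min_le[OF space assms(2,3,5)] .
  moreover have "min (gromov_prod e a' b') (gromov_prod e b b') - 4 * N 3 0 \<le> gromov_prod e a' b"
    using morse_stratum_gromov_prod_min_le[OF space assms(3,4,5)]
    by (simp add: gromov_prod_commute[of e b'])
  moreover have "0 \<le> N 3 0" \<comment> \<open>the four-point condition for \<open>a = b = c\<close> forces this\<close>
    using morse_stratum_gromov_prod_min_le[OF space assms(2,2,2)] gromov_prod_le_dist[of e a a]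
    unfolding gromov_prod_def by simp
  ultimately show ?thesis by linarith
qed

lemma Liminf_gromov_prod_le_of_seq_equiv:
  assumes space: "geodesic_space TYPE('a::metric_space)"
    and "range x \<subseteq> morse_stratum N e" "range x' \<subseteq> morse_stratum N e"
    and "range y' \<subseteq> morse_stratum N e" "range y \<subseteq> morse_stratum N e"
    and "seq_equiv e x x'" "seq_equiv e y (y' :: nat \<Rightarrow> 'a)"
  shows "Liminf (sequentially \<times>\<^sub>F sequentially) (\<lambda>(n, m). ereal (gromov_prod e (x' n) (y' m)))
    \<le> Liminf (sequentially \<times>\<^sub>F sequentially) (\<lambda>(k, l). ereal (gromov_prod e (x k) (y l)))
      + ereal (8 * N 3 0)"
  using assms(6,7) morse_stratum_gromov_prod_chain[OF space] assms(2-5)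
  unfolding seq_equiv_def
  by (intro Liminf_sequentially_prod_le_of_min_bound[where X = "\<lambda>k n. gromov_prod e (x k) (x' n)"
        and Y = "\<lambda>l m. gromov_prod e (y l) (y' m)"]) (auto simp: image_subset_iff)

lemma morse_set_mono: "gauge_le N N' \<Longrightarrow> morse_set N G \<Longrightarrow> morse_set N' G"
  unfolding gauge_le_def morse_set_def by (meson order_trans)

lemma morse_stratum_mono: "gauge_le N N' \<Longrightarrow> morse_stratum N e \<subseteq> morse_stratum N' e"
  unfolding morse_stratum_def using morse_set_mono by blast

lemma bdry_class_mono: "gauge_le N N' \<Longrightarrow> bdry_class N e x \<subseteq> bdry_class N' e x"
  using morse_stratum_mono[of N N' e] unfolding bdry_class_def gromov_seq_def by blast

lemma bdry_class_self: "gromov_seq N e x \<Longrightarrow> x \<in> bdry_class N e x"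
  unfolding bdry_class_def seq_equiv_def gromov_seq_def by blast

theorem lemma3p11:
  fixes N N' :: "real \<Rightarrow> real \<Rightarrow> real" and e :: "'a::metric_space"
    and x y :: "nat \<Rightarrow> 'a"
  assumes "geodesic_space TYPE('a)"
    and "morse_gauge N" and "morse_gauge N'" and "gauge_le N N'"
    and "gromov_seq N e x" and "gromov_seq N e y"
  shows "N_gromov_prod e (bdry_class N e x) (bdry_class N e y)
           \<le> N_gromov_prod e (bdry_class N' e x) (bdry_class N' e y)
       \<and> N_gromov_prod e (bdry_class N' e x) (bdry_class N' e y)
           \<le> N_gromov_prod e (bdry_class N e x) (bdry_class N e y) + ereal (32 * N' 3 0)"
proof
  let ?lim = "\<lambda>(x, y). Liminf (sequentially \<times>\<^sub>F sequentially) (\<lambda>(n, m). ereal (gromov_prod e (x n) (y m)))"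
  let ?S = "N_gromov_prod e (bdry_class N e x) (bdry_class N e y)"
  show "?S \<le> N_gromov_prod e (bdry_class N' e x) (bdry_class N' e y)"
    unfolding N_gromov_prod_def
    by (rule SUP_subset_mono) (use bdry_class_mono[OF assms(4)] in auto)
  have "?lim (x', y') \<le> ?S + ereal (32 * N' 3 0)"
    if x': "x' \<in> bdry_class N' e x" and y': "y' \<in> bdry_class N' e y" for x' y'
  proof -
    have "range x \<subseteq> morse_stratum N' e" "range y \<subseteq> morse_stratum N' e"
      "range x' \<subseteq> morse_stratum N' e" "range y' \<subseteq> morse_stratum N' e"
      using assms(5,6) x' y' morse_stratum_mono[OF assms(4)]
      unfolding bdry_class_def gromov_seq_def by blast+
    then have "?lim (x', y') \<le> ?lim (x, y) + ereal (8 * N' 3 0)"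
      using Liminf_gromov_prod_le_of_seq_equiv[OF assms(1)] x' y'
      unfolding bdry_class_def by simp
    also have "\<dots> \<le> ?S + ereal (32 * N' 3 0)"
      using assms(3) bdry_class_self[OF assms(5)] bdry_class_self[OF assms(6)]
      unfolding N_gromov_prod_def morse_gauge_def by (intro add_mono SUP_upper) auto
    finally show ?thesis .
  qed
  then show "N_gromov_prod e (bdry_class N' e x) (bdry_class N' e y) \<le> ?S + ereal (32 * N' 3 0)"
    unfolding N_gromov_prod_def by (intro SUP_least) auto
qed

end
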